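(* Let $\lambda_{\max}>1$ and let $F:[0,\lambda_{\max}]\to\mathbb{R}$ be continuously differentiable, with $F''$ existing and continuous on $(0,\lambda_{\max})$, $F''(1)<0$, and $F^{(3)},F^{(4)}$ existing and bounded on $[0,\lambda_{\max}]$. Suppose $F(x)<F'(1)(x-1)+F(1)$ for all $x\in[0,\lambda_{\max}]\setminus\{1\}$. Then there exists a concave quadratic function $G$ with $G(1)=F(1)$ and $G'(1)=F'(1)$ such that $F(x)\le G(x)\le F'(1)(x-1)+F(1)$ for all $x\in[0,\lambda_{\max}]$. *)

theory Defs
  imports "HOL-Analysis.Analysis"
begin

definition concave_quadratic :: "(real \<Rightarrow> real) \<Rightarrow> bool" where
  "concave_quadratic G \<longleftrightarrow> (\<exists>a b c. a < 0 \<and> (\<forall>x. G x = a * x^2 + b * x + c))"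

end

theory Submission
  imports Defs
begin

text \<open>The gap between the tangent line of F at 1 and F is positive away from 1. Near 1, Taylor's
  theorem with F''(1) < 0 bounds it below by a multiple of (x - 1)^2; on the compact rest of the
  interval it is bounded below by a positive constant. Hence a small enough multiple c (x - 1)^2 fits
  under the gap on the whole interval, and G is the tangent line minus c (x - 1)^2.\<close>

lemma concave_quadratic_tangent_parabola:
  assumes "c > 0"
  shows "concave_quadratic (\<lambda>x. b * (x - a) + v - c * (x - a)^2)"
  unfolding concave_quadratic_def
proof (intro exI conjI allI)
  show "- c < 0" using assms by simp
  show "b * (x - a) + v - c * (x - a)^2 = - c * x^2 + (b + 2 * c * a) * x + (v - b * a - c * a^2)"
    for x by (simp add: power2_eq_square algebra_simps)
qed

lemma Taylor_upper_bound_second_derivative: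
  fixes F F1 F2 :: "real \<Rightarrow> real"
  assumes F1: "\<And>t. \<bar>t - a\<bar> \<le> d \<Longrightarrow> (F has_real_derivative F1 t) (at t)"
    and F2: "\<And>t. \<bar>t - a\<bar> \<le> d \<Longrightarrow> (F1 has_real_derivative F2 t) (at t)"
    and F2_le: "\<And>t. \<bar>t - a\<bar> \<le> d \<Longrightarrow> F2 t \<le> B"
    and x: "\<bar>x - a\<bar> \<le> d"
  shows "F x \<le> F a + F1 a * (x - a) + B / 2 * (x - a)^2"
proof (cases "x = a")
  case False
  define diff where "diff = (!) [F, F1, F2]"
  have "\<forall>m t. m < 2 \<and> a - d \<le> t \<and> t \<le> a + d \<longrightarrow> (diff m has_real_derivative diff (Suc m) t) (at t)"
  proof (intro allI impI)
    fix m t assume "m < (2::nat) \<and> a - d \<le> t \<and> t \<le> a + d"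
    then show "(diff m has_real_derivative diff (Suc m) t) (at t)"
      using F1[of t] F2[of t] by (auto simp: diff_def less_2_cases_iff)
  qed
  moreover have "a - d \<le> a" "a + d \<ge> a" "a - d \<le> x" "x \<le> a + d"
    using x by auto
  ultimately obtain t where t: "if x < a then x < t \<and> t < a else a < t \<and> t < x"
    and Fx: "F x = (\<Sum>m<2. diff m a / fact m * (x - a)^m) + diff 2 t / fact 2 * (x - a)^2"
    using Taylor[of 2 diff F "a - d" "a + d" a x] False by (auto simp: diff_def)
  have "F2 t / 2 * (x - a)^2 \<le> B / 2 * (x - a)^2"
    using F2_le[of t] t x by (intro mult_right_mono) (auto split: if_splits)
  with Fx show ?thesis
    by (simp add: diff_def numeral_2_eq_2 lessThan_Suc)
qed simp

lemma tangent_gap_quadratic_near_concave_point: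
  fixes F F1 F2 :: "real \<Rightarrow> real"
  assumes "r > 0"
    and F1: "\<And>t. \<bar>t - a\<bar> < r \<Longrightarrow> (F has_real_derivative F1 t) (at t)"
    and F2: "\<And>t. \<bar>t - a\<bar> < r \<Longrightarrow> (F1 has_real_derivative F2 t) (at t)"
    and "isCont F2 a" and "F2 a < 0"
  obtains d where "d > 0"
    and "\<And>x. \<bar>x - a\<bar> \<le> d \<Longrightarrow> - F2 a / 4 * (x - a)^2 \<le> F1 a * (x - a) + F a - F x"
proof -
  obtain e where "e > 0" and e: "\<And>t. dist t a < e \<Longrightarrow> dist (F2 t) (F2 a) < - F2 a / 2"
    using \<open>isCont F2 a\<close> \<open>F2 a < 0\<close> unfolding continuous_at_eps_delta
    by (metis half_gt_zero neg_0_less_iff_less)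
  define d where "d = min (e / 2) (r / 2)"
  have "d > 0" "d < e" "d < r"
    using \<open>e > 0\<close> \<open>r > 0\<close> by (auto simp: d_def)
  have F2_le: "F2 t \<le> F2 a / 2" if "\<bar>t - a\<bar> \<le> d" for t
    using e[of t] that \<open>d < e\<close> by (auto simp: dist_real_def)
  have "- F2 a / 4 * (x - a)^2 \<le> F1 a * (x - a) + F a - F x" if x: "\<bar>x - a\<bar> \<le> d" for x
  proof -
    have "F x \<le> F a + F1 a * (x - a) + (F2 a / 2) / 2 * (x - a)^2"
      by (rule Taylor_upper_bound_second_derivative[OF _ _ F2_le x]) (use F1 F2 \<open>d < r\<close> in auto)
    then show ?thesis by simp
  qed
  with \<open>d > 0\<close> show ?thesis
    using that by blast
qed

lemma compact_continuous_pos_lower_bound: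
  fixes h :: "'a::topological_space \<Rightarrow> real"
  assumes "compact K" "continuous_on K h" "\<And>x. x \<in> K \<Longrightarrow> h x > 0"
  obtains m where "m > 0" "\<And>x. x \<in> K \<Longrightarrow> m \<le> h x"
proof (cases "K = {}")
  case False
  then obtain x0 where "x0 \<in> K" "\<And>x. x \<in> K \<Longrightarrow> h x0 \<le> h x"
    using continuous_attains_inf[OF assms(1) False assms(2)] by blast
  with assms(3) that show ?thesis by blast
qed (use that[of 1] in auto)

lemma quadratic_below_gap_on_compact:
  fixes h :: "real \<Rightarrow> real"
  assumes S: "compact S" "continuous_on S h"
    and pos: "\<And>x. x \<in> S - {a} \<Longrightarrow> h x > 0"
    and near: "d > 0" "k > 0" "\<And>x. x \<in> S \<Longrightarrow> \<bar>x - a\<bar> \<le> d \<Longrightarrow> k * (x - a)^2 \<le> h x"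
  obtains c where "c > 0" "\<And>x. x \<in> S \<Longrightarrow> c * (x - a)^2 \<le> h x"
proof -
  define K where "K = S \<inter> {x. d \<le> \<bar>x - a\<bar>}"
  have "compact K"
    unfolding K_def using S(1)
    by (intro compact_Int_closed closed_Collect_le continuous_intros)
  moreover have "continuous_on K h"
    using S(2) by (rule continuous_on_subset) (auto simp: K_def)
  moreover have "\<And>x. x \<in> K \<Longrightarrow> h x > 0"
    using pos \<open>d > 0\<close> by (auto simp: K_def)
  ultimately obtain m where "m > 0" and m: "\<And>x. x \<in> K \<Longrightarrow> m \<le> h x"
    using compact_continuous_pos_lower_bound by blast
  obtain R where "R > 0" and R: "\<And>x. x \<in> S \<Longrightarrow> \<bar>x - a\<bar> \<le> R"
    using compact_imp_bounded[OF S(1)] bounded_pos_less[of "(\<lambda>x. x - a) ` S"]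
    by (metis bounded_translation_minus le_less real_norm_def image_eqI)
  define c where "c = min k (m / R^2)"
  have "c * (x - a)^2 \<le> h x" if "x \<in> S" for x
  proof (cases "\<bar>x - a\<bar> \<le> d")
    case True
    have "c * (x - a)^2 \<le> k * (x - a)^2"
      by (intro mult_right_mono) (auto simp: c_def)
    with near(3)[OF that True] show ?thesis by linarith
  next
    case False
    have "(x - a)^2 \<le> R^2"
      using R[OF that] by (metis abs_ge_zero power2_abs power_mono)
    then have "c * (x - a)^2 \<le> m / R^2 * R^2"
      using \<open>m > 0\<close> \<open>k > 0\<close> by (intro mult_mono) (auto simp: c_def)
    also have "\<dots> = m" using \<open>R > 0\<close> by simp
    also have "m \<le> h x" using m False that by (auto simp: K_def)
    finally show ?thesis .
  qed
  moreover have "c > 0" using \<open>k > 0\<close> \<open>m > 0\<close> \<open>R > 0\<close> by (simp add: c_def)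
  ultimately show ?thesis using that by blast
qed

theorem lemmaC2:
  fixes F F1 F2 F3 F4 :: "real \<Rightarrow> real" and lmax :: real
  assumes lmax: "lmax > 1"
    and F1: "\<And>x. x \<in> {0..lmax} \<Longrightarrow> (F has_real_derivative F1 x) (at x within {0..lmax})"
    and F1_cont: "continuous_on {0..lmax} F1"
    and F2: "\<And>x. x \<in> {0<..<lmax} \<Longrightarrow> (F1 has_real_derivative F2 x) (at x)"
    and F2_cont: "continuous_on {0<..<lmax} F2"
    and F2_neg: "F2 1 < 0"
    and F3: "\<And>x. x \<in> {0<..<lmax} \<Longrightarrow> (F2 has_real_derivative F3 x) (at x)"
    and F4: "\<And>x. x \<in> {0<..<lmax} \<Longrightarrow> (F3 has_real_derivative F4 x) (at x)"
    and F3_bdd: "bounded (F3 ` {0<..<lmax})"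
    and F4_bdd: "bounded (F4 ` {0<..<lmax})"
    and below: "\<And>x. x \<in> {0..lmax} - {1} \<Longrightarrow> F x < F1 1 * (x - 1) + F 1"
  shows "\<exists>G. concave_quadratic G \<and> G 1 = F 1 \<and> (G has_real_derivative F1 1) (at 1) \<and>
           (\<forall>x\<in>{0..lmax}. F x \<le> G x \<and> G x \<le> F1 1 * (x - 1) + F 1)"
proof -
  define h where "h x = F1 1 * (x - 1) + F 1 - F x" for x
  have "continuous_on {0..lmax} F"
    using F1 by (metis DERIV_continuous continuous_on_eq_continuous_within)
  then have h_cont: "continuous_on {0..lmax} h"
    unfolding h_def by (intro continuous_intros)
  have "isCont F2 1"
    using F2_cont lmax by (simp add: continuous_on_eq_continuous_at)
  moreover have "(F has_real_derivative F1 t) (at t)" "(F1 has_real_derivative F2 t) (at t)"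
    if "\<bar>t - 1\<bar> < min 1 (lmax - 1)" for t
  proof -
    have t: "0 < t" "t < lmax" using that by auto
    show "(F has_real_derivative F1 t) (at t)" using F1[of t] at_within_Icc_at[OF t] t by simp
    show "(F1 has_real_derivative F2 t) (at t)" using F2[of t] t by simp
  qed
  ultimately obtain d where "d > 0"
    and h_near: "\<And>x. \<bar>x - 1\<bar> \<le> d \<Longrightarrow> - F2 1 / 4 * (x - 1)^2 \<le> h x"
    using tangent_gap_quadratic_near_concave_point[of "min 1 (lmax - 1)" 1 F F1 F2] lmax F2_neg
    unfolding h_def by auto
  have h_pos: "\<And>x. x \<in> {0..lmax} - {1} \<Longrightarrow> h x > 0"
    using below by (simp add: h_def)
  obtain c where "c > 0" and c: "\<And>x. x \<in> {0..lmax} \<Longrightarrow> c * (x - 1)^2 \<le> h x"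
    using quadratic_below_gap_on_compact[where a = 1 and k = "- F2 1 / 4",
          OF compact_Icc h_cont h_pos \<open>d > 0\<close>] h_near F2_neg
    by auto
  define G where "G x = F1 1 * (x - 1) + F 1 - c * (x - 1)^2" for x
  have "concave_quadratic G"
    unfolding G_def using \<open>c > 0\<close> by (rule concave_quadratic_tangent_parabola)
  moreover have "(G has_real_derivative F1 1) (at 1)"
    unfolding G_def by (auto intro!: derivative_eq_intros)
  moreover have "F x \<le> G x \<and> G x \<le> F1 1 * (x - 1) + F 1" if "x \<in> {0..lmax}" for x
    using c[OF that] \<open>c > 0\<close> by (simp add: G_def h_def)
  ultimately show ?thesis
    by (intro exI[of _ G]) (simp add: G_def)
qed

end
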